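(* Let $F:B_{++}\to V_{++}$ be continuously differentiable (on an open neighbourhood of $B_{++}$ in $V_{++}$), with components $F_{w_{i,j}}$ ($i\in[K]$, $j\in[n_1]$) and $F_{u_{ab}}$ ($a\in[n_1]$, $b\in[d]$). Suppose $A\in\mathbb{R}^{(K+1)\times(K+1)}_+$ satisfies, for all $i,k\in[K]$, $j,a\in[n_1]$, $b\in[d]$ and $(w,u)\in B_{++}$, $$\langle|\nabla_{w_k}F_{w_{i,j}}(w,u)|,w_k\rangle\le A_{i,k}F_{w_{i,j}}(w,u),\qquad \langle|\nabla_u F_{w_{i,j}}(w,u)|,u\rangle\le A_{i,K+1}F_{w_{i,j}}(w,u),$$ $$\langle|\nabla_{w_k}F_{u_{ab}}(w,u)|,w_k\rangle\le A_{K+1,k}F_{u_{ab}}(w,u),\qquad \langle|\nabla_u F_{u_{ab}}(w,u)|,u\rangle\le A_{K+1,K+1}F_{u_{ab}}(w,u),$$ where $|\cdot|$ is the entrywise absolute value and $\langle\cdot,\cdot\rangle$ the Euclidean (Frobenius) inner product. Then for every $\gamma\in\mathbb{R}^{K+1}_{++}$ and all $(w,u),(\tilde w,\tilde u)\in B_{++}$, $$\mu_\gamma\big(F(w,u),F(\tilde w,\tilde u)\big)\le U\,\mu_\gamma\big((w,u),(\tilde w,\tilde u)\big),\qquad U=\max_{k\in[K+1]}\frac{(A^T\gamma)_k}{\gamma_k}.$$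
   Context: $\mathbb{R}_{++}=(0,\infty)$. $V_{++}=\mathbb{R}^{K\times n_1}_{++}\times\mathbb{R}^{n_1\times d}_{++}$; $w$ has rows $w_1,\dots,w_K$. Given $p_w,p_u\in(1,\infty)$ and $\rho_w,\rho_u>0$, $B_{++}=\{(w,u)\in V_{++} : \|u\|_{p_u}\le\rho_u,\ \|w_i\|_{p_w}\le\rho_w\ \forall i\in[K]\}$ ($\|u\|_{p_u}$ is the entrywise $\ell_{p_u}$ norm). For $\gamma\in\mathbb{R}^{K+1}_{++}$ the weighted Thompson metric on $B_{++}$ is $$\mu_\gamma\big((w,u),(\tilde w,\tilde u)\big)=\sum_{i=1}^K\gamma_i\|\ln(w_i)-\ln(\tilde w_i)\|_\infty+\gamma_{K+1}\|\ln(u)-\ln(\tilde u)\|_\infty,$$ with $\ln$ applied entrywise and $\|\cdot\|_\infty$ the maximum absolute entry. *)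

theory Defs
  imports "HOL-Analysis.Analysis"
begin

text \<open>Index K+1 of the (K+1)-vectors/matrices is represented by None,
index i in [K] by Some i.\<close>

type_synonym ('k,'n,'d) pt = "(real^'n^'k) \<times> (real^'d^'n)"

definition Vpp :: "('k::finite,'n::finite,'d::finite) pt set" where
  "Vpp = {(w,u). (\<forall>i j. 0 < w $ i $ j) \<and> (\<forall>a b. 0 < u $ a $ b)}"

definition lp_row :: "real \<Rightarrow> real^'n::finite \<Rightarrow> real" where
  "lp_row p v = (\<Sum>j\<in>UNIV. \<bar>v $ j\<bar> powr p) powr (1/p)"

definition lp_mat :: "real \<Rightarrow> real^'d::finite^'n::finite \<Rightarrow> real" where
  "lp_mat p u = (\<Sum>a\<in>UNIV. \<Sum>b\<in>UNIV. \<bar>u $ a $ b\<bar> powr p) powr (1/p)"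

definition Bpp :: "real \<Rightarrow> real \<Rightarrow> real \<Rightarrow> real \<Rightarrow> ('k::finite,'n::finite,'d::finite) pt set" where
  "Bpp pw pu \<rho>w \<rho>u = {(w,u) \<in> Vpp. lp_mat pu u \<le> \<rho>u \<and> (\<forall>i. lp_row pw (w $ i) \<le> \<rho>w)}"

definition thompson :: "real^('k::finite option) \<Rightarrow> ('k,'n::finite,'d::finite) pt \<Rightarrow> ('k,'n,'d) pt \<Rightarrow> real" where
  "thompson \<gamma> x y =
     (\<Sum>i\<in>UNIV. \<gamma> $ Some i * Max (range (\<lambda>j. \<bar>ln (fst x $ i $ j) - ln (fst y $ i $ j)\<bar>)))
     + \<gamma> $ None * Max (range (\<lambda>(a,b). \<bar>ln (snd x $ a $ b) - ln (snd y $ a $ b)\<bar>))"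

definition dirW :: "'k::finite \<Rightarrow> 'n::finite \<Rightarrow> ('k,'n,'d::finite) pt" where
  "dirW k l = ((\<chi> i j. if i = k \<and> j = l then 1 else 0), 0)"

definition dirU :: "'n::finite \<Rightarrow> 'd::finite \<Rightarrow> ('k::finite,'n,'d) pt" where
  "dirU a b = (0, (\<chi> i j. if i = a \<and> j = b then 1 else 0))"

end

theory Submission
  imports Defs
begin

text \<open>
  Join \<open>x\<close> and \<open>y\<close> by the entrywise geometric path \<open>z(t) = x\<^sup>1\<^sup>-\<^sup>t y\<^sup>t\<close>, a geodesic of the
  Thompson metric; by convexity of \<open>exp\<close> it stays in the \<open>\<ell>\<^sub>p\<close> balls, hence in \<open>B\<^sub>+\<^sub>+\<close>.
  Along it, the entries of each block of \<open>log z\<close> move with speed at most the corresponding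
  block distance of \<open>x\<close> and \<open>y\<close>, so the hypotheses on \<open>A\<close> bound the logarithmic derivative
  of every coordinate of \<open>F(z(t))\<close>, and the mean value theorem gives
  \<open>dist\<^sub>c(F x, F y) \<le> \<Sum>\<^sub>c\<^sub>' A\<^sub>c\<^sub>c\<^sub>' dist\<^sub>c\<^sub>'(x, y)\<close> for each block \<open>c\<close>.
  Weighting by \<open>\<gamma>\<close> and summing, the coefficient of \<open>dist\<^sub>k(x, y)\<close> is \<open>(A\<^sup>T\<gamma>)\<^sub>k \<le> U \<gamma>\<^sub>k\<close>.
\<close>

lemma sum_sum_delta:
  fixes f :: "'a::finite \<Rightarrow> 'b::finite \<Rightarrow> 'c::comm_monoid_add"
  shows "(\<Sum>k\<in>UNIV. \<Sum>l\<in>UNIV. if i = k \<and> j = l then f k l else 0) = f i j"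
proof -
  have "(\<Sum>l\<in>UNIV. if i = k \<and> j = l then f k l else 0) = (if i = k then f k j else 0)" for k
    by (cases "i = k") (simp_all add: sum.delta)
  then show ?thesis by (simp add: sum.delta)
qed

lemma pt_expansion:
  "p = (\<Sum>k\<in>UNIV. \<Sum>l\<in>UNIV. fst p $ k $ l *\<^sub>R dirW k l)
     + (\<Sum>a\<in>UNIV. \<Sum>b\<in>UNIV. snd p $ a $ b *\<^sub>R dirU a b)"
  by (simp add: prod_eq_iff vec_eq_iff fst_sum snd_sum sum_component dirW_def dirU_def
        if_distrib[of "\<lambda>x. _ * x"] sum_sum_delta cong: if_cong)

definition map2_pt ::
    "(real \<Rightarrow> real \<Rightarrow> real) \<Rightarrow> ('k::finite,'n::finite,'d::finite) pt \<Rightarrow> ('k,'n,'d) pt \<Rightarrow> ('k,'n,'d) pt"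
  where "map2_pt \<phi> x y =
    ((\<chi> i j. \<phi> (fst x $ i $ j) (fst y $ i $ j)), (\<chi> a b. \<phi> (snd x $ a $ b) (snd y $ a $ b)))"

lemma has_derivative_map2_pt:
  assumes "\<And>a b. ((\<lambda>s. \<phi> s a b) has_real_derivative \<phi>' a b) (at t)"
  shows "((\<lambda>s. map2_pt (\<phi> s) x y) has_derivative (\<lambda>h. h *\<^sub>R map2_pt \<phi>' x y)) (at t)"
proof -
  have "((\<lambda>s. \<phi> s a b) has_derivative (\<lambda>h. h * \<phi>' a b)) (at t)" for a b
    using assms[of a b] by (simp add: has_real_derivative_iff_has_vector_derivative has_vector_derivative_def)
  then have "((\<lambda>s. (\<Sum>k\<in>UNIV. \<Sum>l\<in>UNIV. fst (map2_pt (\<phi> s) x y) $ k $ l *\<^sub>R dirW k l)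
     + (\<Sum>a\<in>UNIV. \<Sum>b\<in>UNIV. snd (map2_pt (\<phi> s) x y) $ a $ b *\<^sub>R dirU a b)) has_derivative
     (\<lambda>h. (\<Sum>k\<in>UNIV. \<Sum>l\<in>UNIV. (h * fst (map2_pt \<phi>' x y) $ k $ l) *\<^sub>R dirW k l)
     + (\<Sum>a\<in>UNIV. \<Sum>b\<in>UNIV. (h * snd (map2_pt \<phi>' x y) $ a $ b) *\<^sub>R dirU a b))) (at t)"
    unfolding map2_pt_def
    by (auto intro!: has_derivative_add has_derivative_sum has_derivative_scaleR_left)
  then show ?thesis
    by (subst (2) pt_expansion) (simp add: pt_expansion[symmetric] scaleR_add_right scaleR_sum_right)
qed

definition geo_interp :: "real \<Rightarrow> real \<Rightarrow> real \<Rightarrow> real" where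
  "geo_interp t a b = exp ((1 - t) * ln a + t * ln b)"

lemma geo_interp_pos: "0 < geo_interp t a b"
  by (simp add: geo_interp_def)

lemma geo_interp_0: "0 < a \<Longrightarrow> geo_interp 0 a b = a"
  by (simp add: geo_interp_def)

lemma geo_interp_1: "0 < b \<Longrightarrow> geo_interp 1 a b = b"
  by (simp add: geo_interp_def)

lemma has_real_derivative_geo_interp:
  "((\<lambda>s. geo_interp s a b) has_real_derivative geo_interp t a b * (ln b - ln a)) (at t)"
  unfolding geo_interp_def by (auto intro!: derivative_eq_intros simp: algebra_simps)

lemma geo_interp_powr:
  assumes "0 < a" "0 < b"
  shows "geo_interp t a b powr p = geo_interp t (a powr p) (b powr p)"
  using assms by (simp add: geo_interp_def powr_def algebra_simps)

lemma geo_interp_le_convex_comb: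
  assumes "0 < a" "0 < b" "0 \<le> t" "t \<le> 1"
  shows "geo_interp t a b \<le> (1 - t) * a + t * b"
  using convex_onD[OF exp_convex, of t "ln a" "ln b"] assms by (simp add: geo_interp_def)

lemma lp_norm_geo_interp_le:
  fixes a b :: "'a \<Rightarrow> real"
  assumes S: "finite S" and p: "0 < p" and pos: "\<And>j. j \<in> S \<Longrightarrow> 0 < a j \<and> 0 < b j"
    and a: "(\<Sum>j\<in>S. \<bar>a j\<bar> powr p) powr (1/p) \<le> \<rho>"
    and b: "(\<Sum>j\<in>S. \<bar>b j\<bar> powr p) powr (1/p) \<le> \<rho>"
    and t: "0 \<le> t" "t \<le> 1"
  shows "(\<Sum>j\<in>S. \<bar>geo_interp t (a j) (b j)\<bar> powr p) powr (1/p) \<le> \<rho>"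
proof -
  have \<rho>: "0 \<le> \<rho>" using a by (meson order.trans powr_ge_zero)
  have le_pow: "X \<le> \<rho> powr p" if "0 \<le> X" "X powr (1/p) \<le> \<rho>" for X
  proof -
    have "X = (X powr (1/p)) powr p" using that p by (simp add: powr_powr)
    also have "\<dots> \<le> \<rho> powr p" using that p by (intro powr_mono2) auto
    finally show ?thesis .
  qed
  have "(\<Sum>j\<in>S. \<bar>geo_interp t (a j) (b j)\<bar> powr p)
      = (\<Sum>j\<in>S. geo_interp t (\<bar>a j\<bar> powr p) (\<bar>b j\<bar> powr p))"
    using pos by (intro sum.cong) (auto simp: geo_interp_powr geo_interp_pos abs_of_pos)
  also have "\<dots> \<le> (\<Sum>j\<in>S. (1 - t) * \<bar>a j\<bar> powr p + t * \<bar>b j\<bar> powr p)"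
    using pos t by (intro sum_mono geo_interp_le_convex_comb) (auto dest: pos)
  also have "\<dots> = (1 - t) * (\<Sum>j\<in>S. \<bar>a j\<bar> powr p) + t * (\<Sum>j\<in>S. \<bar>b j\<bar> powr p)"
    by (simp add: sum.distrib sum_distrib_left)
  also have "\<dots> \<le> (1 - t) * \<rho> powr p + t * \<rho> powr p"
    using t a b by (intro add_mono mult_left_mono le_pow sum_nonneg) auto
  also have "\<dots> = \<rho> powr p" by (simp add: algebra_simps)
  finally have "(\<Sum>j\<in>S. \<bar>geo_interp t (a j) (b j)\<bar> powr p) powr (1/p) \<le> (\<rho> powr p) powr (1/p)"
    using p by (intro powr_mono2) (auto intro: sum_nonneg)
  also have "\<dots> = \<rho>" using \<rho> p by (simp add: powr_powr)
  finally show ?thesis .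
qed

definition geo_path :: "('k::finite,'n::finite,'d::finite) pt \<Rightarrow> ('k,'n,'d) pt \<Rightarrow> real \<Rightarrow> ('k,'n,'d) pt"
  where
  "geo_path x y t = map2_pt (geo_interp t) x y"

lemma geo_path_0: "x \<in> Vpp \<Longrightarrow> geo_path x y 0 = x"
  by (auto simp: geo_path_def map2_pt_def geo_interp_0 Vpp_def prod_eq_iff vec_eq_iff)

lemma geo_path_1: "y \<in> Vpp \<Longrightarrow> geo_path x y 1 = y"
  by (auto simp: geo_path_def map2_pt_def geo_interp_1 Vpp_def prod_eq_iff vec_eq_iff)

lemma geo_path_in_Bpp:
  assumes x: "x \<in> Bpp pw pu \<rho>w \<rho>u" and y: "y \<in> Bpp pw pu \<rho>w \<rho>u"
    and pw: "0 < pw" and pu: "0 < pu" and t: "0 \<le> t" "t \<le> 1"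
  shows "geo_path x y t \<in> Bpp pw pu \<rho>w \<rho>u"
proof -
  have pos: "0 < fst x $ i $ j" "0 < snd x $ a $ b" "0 < fst y $ i $ j" "0 < snd y $ a $ b" for i j a b
    using x y by (auto simp: Bpp_def Vpp_def)
  have rows: "lp_row pw (fst (geo_path x y t) $ i) \<le> \<rho>w" for i
    using lp_norm_geo_interp_le[OF finite_class.finite_UNIV pw _ _ _ t, of "\<lambda>j. fst x $ i $ j" "\<lambda>j. fst y $ i $ j"]
      x y pos by (auto simp: lp_row_def Bpp_def geo_path_def map2_pt_def)
  have uncurry: "(\<Sum>a\<in>UNIV. \<Sum>b\<in>UNIV. f a b) = (\<Sum>q\<in>UNIV. f (fst q) (snd q))"
    for f :: "'n \<Rightarrow> 'd \<Rightarrow> real"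
    by (simp add: sum.cartesian_product split_def)
  have mat: "lp_mat pu (snd (geo_path x y t)) \<le> \<rho>u"
    using lp_norm_geo_interp_le[OF finite_class.finite_UNIV pu _ _ _ t,
        of "\<lambda>q. snd x $ fst q $ snd q" "\<lambda>q. snd y $ fst q $ snd q"]
      x y pos by (auto simp: lp_mat_def uncurry Bpp_def geo_path_def map2_pt_def)
  show ?thesis
    using rows mat by (simp add: Bpp_def Vpp_def geo_path_def map2_pt_def geo_interp_pos)
qed

lemma has_derivative_geo_path:
  "(geo_path x y has_derivative (\<lambda>h. h *\<^sub>R map2_pt (\<lambda>a b. geo_interp t a b * (ln b - ln a)) x y)) (at t)"
  unfolding geo_path_def[abs_def] by (intro has_derivative_map2_pt has_real_derivative_geo_interp)


lemma abs_ln_diff_le_of_deriv_le: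
  fixes g g' :: "real \<Rightarrow> real"
  assumes deriv: "\<And>t. 0 \<le> t \<Longrightarrow> t \<le> 1 \<Longrightarrow> (g has_real_derivative g' t) (at t)"
    and pos: "\<And>t. 0 \<le> t \<Longrightarrow> t \<le> 1 \<Longrightarrow> 0 < g t"
    and bound: "\<And>t. 0 \<le> t \<Longrightarrow> t \<le> 1 \<Longrightarrow> \<bar>g' t\<bar> \<le> M * g t"
  shows "\<bar>ln (g 1) - ln (g 0)\<bar> \<le> M"
proof -
  have "((\<lambda>t. ln (g t)) has_real_derivative g' t / g t) (at t)" if "0 \<le> t" "t \<le> 1" for t
    using DERIV_chain2[OF DERIV_ln[OF pos[OF that]] deriv[OF that]] by (simp add: field_simps)
  from MVT2[of 0 1 "\<lambda>t. ln (g t)", OF _ this]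
  obtain t where t: "0 < t" "t < 1" and eq: "ln (g 1) - ln (g 0) = g' t / g t"
    by auto
  have "\<bar>g' t\<bar> / g t \<le> M"
    using bound[of t] pos[of t] t by (simp add: pos_divide_le_eq)
  then show ?thesis using pos[of t] t by (simp add: eq)
qed

lemma sum_UNIV_option: "(\<Sum>c\<in>UNIV. f c) = f None + (\<Sum>k\<in>UNIV. f (Some k))"
  for f :: "'k::finite option \<Rightarrow> 'a::comm_monoid_add"
  by (simp add: UNIV_option_conv sum.reindex)

definition block_dist :: "('k::finite,'n::finite,'d::finite) pt \<Rightarrow> ('k,'n,'d) pt \<Rightarrow> 'k option \<Rightarrow> real"
  where
  "block_dist x y c = (case c of
      Some i \<Rightarrow> Max (range (\<lambda>j. \<bar>ln (fst x $ i $ j) - ln (fst y $ i $ j)\<bar>))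
    | None \<Rightarrow> Max (range (\<lambda>(a,b). \<bar>ln (snd x $ a $ b) - ln (snd y $ a $ b)\<bar>)))"

lemma thompson_eq_sum_block_dist: "thompson \<gamma> x y = (\<Sum>c\<in>UNIV. \<gamma> $ c * block_dist x y c)"
  by (simp add: thompson_def block_dist_def sum_UNIV_option)

lemma abs_ln_fst_le_block_dist: "\<bar>ln (fst y $ k $ l) - ln (fst x $ k $ l)\<bar> \<le> block_dist x y (Some k)"
  unfolding block_dist_def by (auto intro: Max_ge simp: abs_minus_commute)

lemma abs_ln_snd_le_block_dist: "\<bar>ln (snd y $ a $ b) - ln (snd x $ a $ b)\<bar> \<le> block_dist x y None"
proof -
  have "\<bar>ln (snd y $ a $ b) - ln (snd x $ a $ b)\<bar>
      = (\<lambda>(a,b). \<bar>ln (snd x $ a $ b) - ln (snd y $ a $ b)\<bar>) (a,b)"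
    by (simp add: abs_minus_commute)
  also have "\<dots> \<le> block_dist x y None"
    unfolding block_dist_def option.case by (rule Max_ge) auto
  finally show ?thesis .
qed

lemma block_dist_nonneg: "0 \<le> block_dist x y c"
proof (cases c)
  case None
  then show ?thesis using abs_ln_snd_le_block_dist[of y undefined undefined x] by simp
next
  case (Some k)
  then show ?thesis using abs_ln_fst_le_block_dist[of y k undefined x] by simp
qed

lemma bounded_linear_fst_nth_nth: "bounded_linear (\<lambda>p::('k::finite,'n::finite,'d::finite) pt. fst p $ i $ j)"
  by (rule bounded_linear_compose[OF bounded_linear_compose[OF bounded_linear_vec_nth bounded_linear_vec_nth]
        bounded_linear_fst])

lemma bounded_linear_snd_nth_nth: "bounded_linear (\<lambda>p::('k::finite,'n::finite,'d::finite) pt. snd p $ a $ b)"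
  by (rule bounded_linear_compose[OF bounded_linear_compose[OF bounded_linear_vec_nth bounded_linear_vec_nth]
        bounded_linear_snd])

lemma abs_linear_directional_le:
  fixes L :: "('k::finite,'n::finite,'d::finite) pt \<Rightarrow> ('k,'n,'d) pt" and P :: "('k,'n,'d) pt \<Rightarrow> real"
  assumes P: "linear P" and L: "linear L"
    and D: "\<And>c. 0 \<le> D c"
    and vW: "\<And>k l. \<bar>fst v $ k $ l\<bar> \<le> D (Some k) * fst z $ k $ l"
    and vU: "\<And>a b. \<bar>snd v $ a $ b\<bar> \<le> D None * snd z $ a $ b"
    and hW: "\<And>k. (\<Sum>l\<in>UNIV. \<bar>P (L (dirW k l))\<bar> * fst z $ k $ l) \<le> \<alpha> (Some k) * r"
    and hU: "(\<Sum>a\<in>UNIV. \<Sum>b\<in>UNIV. \<bar>P (L (dirU a b))\<bar> * snd z $ a $ b) \<le> \<alpha> None * r"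
  shows "\<bar>P (L v)\<bar> \<le> (\<Sum>c\<in>UNIV. \<alpha> c * D c) * r"
proof -
  let ?W = "\<lambda>k l. \<bar>P (L (dirW k l))\<bar>" and ?U = "\<lambda>a b. \<bar>P (L (dirU a b))\<bar>"
  have "P (L v) = (\<Sum>k\<in>UNIV. \<Sum>l\<in>UNIV. fst v $ k $ l * P (L (dirW k l)))
                + (\<Sum>a\<in>UNIV. \<Sum>b\<in>UNIV. snd v $ a $ b * P (L (dirU a b)))"
    by (subst pt_expansion)
       (simp add: linear_add[OF P] linear_add[OF L] linear_sum[OF P] linear_sum[OF L]
          linear_scale[OF P] linear_scale[OF L])
  then have "\<bar>P (L v)\<bar> \<le> (\<Sum>k\<in>UNIV. \<Sum>l\<in>UNIV. \<bar>fst v $ k $ l\<bar> * ?W k l)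
                        + (\<Sum>a\<in>UNIV. \<Sum>b\<in>UNIV. \<bar>snd v $ a $ b\<bar> * ?U a b)"
    by (simp only: abs_mult[symmetric])
       (intro order.trans[OF abs_triangle_ineq] add_mono order.trans[OF sum_abs] sum_mono order.refl)
  also have "\<dots> \<le> (\<Sum>k\<in>UNIV. D (Some k) * (\<Sum>l\<in>UNIV. ?W k l * fst z $ k $ l))
                 + D None * (\<Sum>a\<in>UNIV. \<Sum>b\<in>UNIV. ?U a b * snd z $ a $ b)"
    unfolding sum_distrib_left
    by (intro add_mono sum_mono)
       (auto intro: order.trans[OF mult_right_mono[OF vW]] order.trans[OF mult_right_mono[OF vU]])
  also have "\<dots> \<le> (\<Sum>k\<in>UNIV. D (Some k) * (\<alpha> (Some k) * r)) + D None * (\<alpha> None * r)"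
    by (intro add_mono sum_mono mult_left_mono hW hU D)
  also have "\<dots> = (\<Sum>c\<in>UNIV. \<alpha> c * D c) * r"
    by (simp add: sum_UNIV_option sum_distrib_right sum_distrib_left algebra_simps)
  finally show ?thesis .
qed

lemma abs_ln_diff_coordinate_le:
  fixes F :: "('k::finite,'n::finite,'d::finite) pt \<Rightarrow> ('k,'n,'d) pt"
    and F' :: "('k,'n,'d) pt \<Rightarrow> (('k,'n,'d) pt \<Rightarrow>\<^sub>L ('k,'n,'d) pt)"
    and P :: "('k,'n,'d) pt \<Rightarrow> real" and pw pu \<rho>w \<rho>u :: real
  defines "B \<equiv> Bpp pw pu \<rho>w \<rho>u"
  assumes P: "bounded_linear P" and pw: "0 < pw" and pu: "0 < pu"
    and x: "x \<in> B" and y: "y \<in> B"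
    and F_deriv: "\<And>z. z \<in> B \<Longrightarrow> (F has_derivative blinfun_apply (F' z)) (at z)"
    and F_pos: "\<And>z. z \<in> B \<Longrightarrow> 0 < P (F z)"
    and hW: "\<And>k z. z \<in> B \<Longrightarrow>
       (\<Sum>l\<in>UNIV. \<bar>P (F' z (dirW k l))\<bar> * fst z $ k $ l) \<le> \<alpha> (Some k) * P (F z)"
    and hU: "\<And>z. z \<in> B \<Longrightarrow>
       (\<Sum>a\<in>UNIV. \<Sum>b\<in>UNIV. \<bar>P (F' z (dirU a b))\<bar> * snd z $ a $ b) \<le> \<alpha> None * P (F z)"
  shows "\<bar>ln (P (F x)) - ln (P (F y))\<bar> \<le> (\<Sum>c\<in>UNIV. \<alpha> c * block_dist x y c)"
proof -
  interpret P: bounded_linear P by (rule P)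
  define z where "z = geo_path x y"
  define v where "v t = map2_pt (\<lambda>a b. geo_interp t a b * (ln b - ln a)) x y" for t
  define g where "g t = P (F (z t))" for t
  define g' where "g' t = P (F' (z t) (v t))" for t
  have zB: "z t \<in> B" if "0 \<le> t" "t \<le> 1" for t
    unfolding z_def B_def using geo_path_in_Bpp[OF x[unfolded B_def] y[unfolded B_def] pw pu that] .
  have "(g has_real_derivative g' t) (at t)" if "0 \<le> t" "t \<le> 1" for t
  proof -
    have "((\<lambda>t. P (F (z t))) has_derivative (\<lambda>h. P (F' (z t) (h *\<^sub>R v t)))) (at t)"
      using P.has_derivative[OF diff_chain_at[OF has_derivative_geo_path F_deriv[OF zB[OF that], unfolded z_def]]]
      by (simp add: z_def v_def o_def)
    then show ?thesis
      by (simp add: g_def[abs_def] g'_def has_real_derivative_iff_has_vector_derivative has_vector_derivative_def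
          blinfun.scaleR_right P.scale)
  qed
  moreover have "0 < g t" if "0 \<le> t" "t \<le> 1" for t
    using F_pos[OF zB[OF that]] by (simp add: g_def)
  moreover have "\<bar>g' t\<bar> \<le> (\<Sum>c\<in>UNIV. \<alpha> c * block_dist x y c) * g t" if "0 \<le> t" "t \<le> 1" for t
    unfolding g_def g'_def
  proof (rule abs_linear_directional_le[OF P.linear
        bounded_linear.linear[OF blinfun.bounded_linear_right] block_dist_nonneg])
    show "\<bar>fst (v t) $ k $ l\<bar> \<le> block_dist x y (Some k) * fst (z t) $ k $ l" for k l
      using abs_ln_fst_le_block_dist[of y k l x]
      by (simp add: v_def z_def geo_path_def map2_pt_def abs_mult geo_interp_pos abs_of_pos mult.commute)
    show "\<bar>snd (v t) $ a $ b\<bar> \<le> block_dist x y None * snd (z t) $ a $ b" for a b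
      using abs_ln_snd_le_block_dist[of y a b x]
      by (simp add: v_def z_def geo_path_def map2_pt_def abs_mult geo_interp_pos abs_of_pos mult.commute)
  qed (use hW hU zB that in auto)
  ultimately have "\<bar>ln (g 1) - ln (g 0)\<bar> \<le> (\<Sum>c\<in>UNIV. \<alpha> c * block_dist x y c)"
    by (rule abs_ln_diff_le_of_deriv_le)
  moreover have "z 0 = x" "z 1 = y"
    using x y by (auto simp: z_def B_def Bpp_def geo_path_0 geo_path_1)
  ultimately show ?thesis by (simp add: g_def abs_minus_commute)
qed

lemma weighted_sum_le_max_ratio:
  fixes A :: "real^'a::finite^'a" and \<gamma> :: "real^'a" and D :: "'a \<Rightarrow> real"
  assumes \<gamma>: "\<And>k. 0 < \<gamma> $ k" and D: "\<And>k. 0 \<le> D k"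
  shows "(\<Sum>c\<in>UNIV. \<gamma> $ c * (\<Sum>k\<in>UNIV. A $ c $ k * D k))
    \<le> Max (range (\<lambda>k. (transpose A *v \<gamma>) $ k / \<gamma> $ k)) * (\<Sum>k\<in>UNIV. \<gamma> $ k * D k)"
proof -
  define U where "U = Max (range (\<lambda>k. (transpose A *v \<gamma>) $ k / \<gamma> $ k))"
  have U: "(transpose A *v \<gamma>) $ k \<le> U * \<gamma> $ k" for k
  proof -
    have "(transpose A *v \<gamma>) $ k / \<gamma> $ k \<le> U" unfolding U_def by (rule Max_ge) auto
    then show ?thesis using \<gamma>[of k] by (simp add: pos_divide_le_eq)
  qed
  have "(\<Sum>c\<in>UNIV. \<gamma> $ c * (\<Sum>k\<in>UNIV. A $ c $ k * D k))
      = (\<Sum>c\<in>UNIV. \<Sum>k\<in>UNIV. \<gamma> $ c * A $ c $ k * D k)"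
    by (simp add: sum_distrib_left mult_ac)
  also have "\<dots> = (\<Sum>k\<in>UNIV. \<Sum>c\<in>UNIV. \<gamma> $ c * A $ c $ k * D k)"
    by (rule sum.swap)
  also have "\<dots> = (\<Sum>k\<in>UNIV. (transpose A *v \<gamma>) $ k * D k)"
    by (simp add: matrix_vector_mult_def transpose_def sum_distrib_left mult_ac)
  also have "\<dots> \<le> (\<Sum>k\<in>UNIV. U * \<gamma> $ k * D k)"
    by (intro sum_mono mult_right_mono U D)
  also have "\<dots> = U * (\<Sum>k\<in>UNIV. \<gamma> $ k * D k)"
    by (simp add: sum_distrib_left mult_ac)
  finally show ?thesis unfolding U_def .
qed

theorem mainTheorem6:
  fixes F :: "('k::finite,'n::finite,'d::finite) pt \<Rightarrow> ('k,'n,'d) pt"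
    and F' :: "('k,'n,'d) pt \<Rightarrow> (('k,'n,'d) pt \<Rightarrow>\<^sub>L ('k,'n,'d) pt)"
    and S :: "('k,'n,'d) pt set"
    and A :: "real^('k option)^('k option)"
    and \<gamma> :: "real^('k option)"
    and pw pu \<rho>w \<rho>u :: real
  assumes pw: "1 < pw" and pu: "1 < pu" and \<rho>w: "0 < \<rho>w" and \<rho>u: "0 < \<rho>u"
    and F_maps: "F ` Bpp pw pu \<rho>w \<rho>u \<subseteq> Vpp"
    and S_open: "open S" and S_sub: "Bpp pw pu \<rho>w \<rho>u \<subseteq> S" and S_V: "S \<subseteq> Vpp"
    and F_deriv: "\<And>x. x \<in> S \<Longrightarrow> (F has_derivative blinfun_apply (F' x)) (at x)"
    and F'_cont: "continuous_on S F'"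
    and A_nonneg: "\<And>i k. 0 \<le> A $ i $ k"
    and ww: "\<And>i j k w u. (w,u) \<in> Bpp pw pu \<rho>w \<rho>u \<Longrightarrow>
       (\<Sum>l\<in>UNIV. \<bar>fst (F' (w,u) (dirW k l)) $ i $ j\<bar> * w $ k $ l)
         \<le> A $ Some i $ Some k * fst (F (w,u)) $ i $ j"
    and wu: "\<And>i j w u. (w,u) \<in> Bpp pw pu \<rho>w \<rho>u \<Longrightarrow>
       (\<Sum>a\<in>UNIV. \<Sum>b\<in>UNIV. \<bar>fst (F' (w,u) (dirU a b)) $ i $ j\<bar> * u $ a $ b)
         \<le> A $ Some i $ None * fst (F (w,u)) $ i $ j"
    and uw: "\<And>a b k w u. (w,u) \<in> Bpp pw pu \<rho>w \<rho>u \<Longrightarrow>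
       (\<Sum>l\<in>UNIV. \<bar>snd (F' (w,u) (dirW k l)) $ a $ b\<bar> * w $ k $ l)
         \<le> A $ None $ Some k * snd (F (w,u)) $ a $ b"
    and uu: "\<And>a b w u. (w,u) \<in> Bpp pw pu \<rho>w \<rho>u \<Longrightarrow>
       (\<Sum>a'\<in>UNIV. \<Sum>b'\<in>UNIV. \<bar>snd (F' (w,u) (dirU a' b')) $ a $ b\<bar> * u $ a' $ b')
         \<le> A $ None $ None * snd (F (w,u)) $ a $ b"
    and \<gamma>_pos: "\<And>k. 0 < \<gamma> $ k"
    and x: "x \<in> Bpp pw pu \<rho>w \<rho>u" and y: "y \<in> Bpp pw pu \<rho>w \<rho>u"
  shows "thompson \<gamma> (F x) (F y)
     \<le> Max (range (\<lambda>k. (transpose A *v \<gamma>) $ k / \<gamma> $ k)) * thompson \<gamma> x y"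
proof -
  let ?B = "Bpp pw pu \<rho>w \<rho>u"
  have pw0: "0 < pw" and pu0: "0 < pu" using pw pu by simp_all
  have F_deriv_B: "\<And>z. z \<in> ?B \<Longrightarrow> (F has_derivative blinfun_apply (F' z)) (at z)"
    using F_deriv S_sub by blast
  have F_pos: "0 < fst (F z) $ i $ j" "0 < snd (F z) $ a $ b" if "z \<in> ?B" for z i j a b
    using F_maps that by (cases "F z"; force simp: Vpp_def)+
  have block_dist_F: "block_dist (F x) (F y) c \<le> (\<Sum>c'\<in>UNIV. A $ c $ c' * block_dist x y c')" for c
  proof (cases c)
    case (Some i)
    have "\<bar>ln (fst (F x) $ i $ j) - ln (fst (F y) $ i $ j)\<bar>
        \<le> (\<Sum>c'\<in>UNIV. A $ Some i $ c' * block_dist x y c')"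
      for j
      by (rule abs_ln_diff_coordinate_le[where P = "\<lambda>p. fst p $ i $ j", OF _ pw0 pu0 x y F_deriv_B])
         (auto intro: F_pos ww wu bounded_linear_fst_nth_nth)
    then show ?thesis using Some by (auto simp: block_dist_def intro: Max.boundedI)
  next
    case None
    have "\<bar>ln (snd (F x) $ a $ b) - ln (snd (F y) $ a $ b)\<bar>
        \<le> (\<Sum>c'\<in>UNIV. A $ None $ c' * block_dist x y c')"
      for a b
      by (rule abs_ln_diff_coordinate_le[where P = "\<lambda>p. snd p $ a $ b", OF _ pw0 pu0 x y F_deriv_B])
         (auto intro: F_pos uw uu bounded_linear_snd_nth_nth)
    then show ?thesis using None by (auto simp: block_dist_def intro: Max.boundedI)
  qed
  have "thompson \<gamma> (F x) (F y) = (\<Sum>c\<in>UNIV. \<gamma> $ c * block_dist (F x) (F y) c)"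
    by (rule thompson_eq_sum_block_dist)
  also have "\<dots> \<le> (\<Sum>c\<in>UNIV. \<gamma> $ c * (\<Sum>c'\<in>UNIV. A $ c $ c' * block_dist x y c'))"
    by (intro sum_mono mult_left_mono block_dist_F less_imp_le[OF \<gamma>_pos])
  also have "\<dots> \<le> Max (range (\<lambda>k. (transpose A *v \<gamma>) $ k / \<gamma> $ k)) * thompson \<gamma> x y"
    unfolding thompson_eq_sum_block_dist by (rule weighted_sum_le_max_ratio[OF \<gamma>_pos block_dist_nonneg])
  finally show ?thesis .
qed

end
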